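(* Let $\mathcal{Q}$ be an arbitrary (possibly infinite) set of generalized quantifiers of width $1$, let $d \in \mathbb{N}$, and let $(\mathfrak{M},w)$ and $(\mathfrak{N},v)$ be pointed Kripke models over the same finite set $\Phi$ of proposition symbols. Then the following are equivalent: (1) $\mathfrak{M},w \sim^d_{\mathcal{Q}} \mathfrak{N},v$, i.e. Player 2 has a winning strategy in the $d$-round $\mathcal{Q}$-bisimulation game played on $(\mathfrak{M},w)$ and $(\mathfrak{N},v)$; (2) $\mathfrak{M},w \equiv^d_{\mathrm{PL}(\mathcal{Q})} \mathfrak{N},v$; (3) $\mathfrak{N},v \Vdash \varphi^{\mathcal{Q},d}_{\mathfrak{M}\sqcup\mathfrak{N},w}$.
   Context: Kripke models: fix a finite set $\Phi$ of proposition symbols. A Kripke model is $\mathfrak{M}=(V,E,\ell)$ with $V$ a finite non-empty set, $E\subseteq V\times V$ (loops and non-symmetric edges allowed), and $\ell:V\to\mathcal{P}(\Phi)$. For $u\in V$, $N(u)=\{u'\in V\mid (u,u')\in E\}$. A pointed Kripke model is a pair $(\mathfrak{M},w)$ with $w\in V$. $\mathfrak{M}\sqcup\mathfrak{N}$ denotes the disjoint union of Kripke models. Generalized quantifiers: a generalized quantifier (of width 1) is a class $Q$ of pairs $(D,P)$ with $D$ a set and $P\subseteq D$, closed under isomorphism. It gives a modality $\langle Q\rangle$ with semantics $\mathfrak{M},u\Vdash\langle Q\rangle\varphi$ iff $(N(u),\{u'\in N(u)\mid \mathfrak{M},u'\Vdash\varphi\})\in Q$. $\mathrm{PL}(\mathcal{Q})$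 is the set of formulas generated by $\varphi::=\bot\mid p\mid\neg\varphi\mid\varphi\wedge\varphi\mid\varphi\vee\varphi\mid\langle Q\rangle\varphi$ ($p\in\Phi$, $Q\in\mathcal{Q}$), with the usual Boolean semantics and $\mathfrak{M},u\Vdash p$ iff $p\in\ell(u)$. Modal depth: $\mathrm{md}(\bot)=\mathrm{md}(p)=0$, $\mathrm{md}(\neg\varphi)=\mathrm{md}(\varphi)$, $\mathrm{md}$ of $\wedge,\vee$ is the max, $\mathrm{md}(\langle Q\rangle\varphi)=1+\mathrm{md}(\varphi)$. $\mathrm{PL}(\mathcal{Q})^d$ is the set of formulas of depth $\le d$, and $\mathfrak{M},w\equiv^d_{\mathrm{PL}(\mathcal{Q})}\mathfrak{N},v$ means every formula of $\mathrm{PL}(\mathcal{Q})^d$ is true at $(\mathfrak{M},w)$ iff it is true at $(\mathfrak{N},v)$. Types: for a Kripke model $\mathfrak{K}$ and $u\in\mathfrak{K}$, let $\varphi^{\mathcal{Q},0}_{\mathfrak{K},u}=\bigwedge\{p\mid \mathfrak{K},u\Vdash p\}\wedge\bigwedge\{\neg p\mid \mathfrak{K},u\Vdash\neg p\}$, and $\varphi^{\mathcal{Q},d+1}_{\mathfrak{K},u}=\varphi^{\mathcal{Q},0}_{\mathfrak{K},u}\wedge\bigwedge\{\langle Q\rangle\bigvee C\}\wedge\bigwedge\{\neg\langle Q\rangle\bigvee C\}$, where the first big conjunction ranges over all $Q\in\mathcal{Q}$ and $C\subseteq\{\varphi^{\mathcal{Q},d}_{\mathfrak{K},u'}\mid u'\in\mathfrak{K}\}$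 with $\mathfrak{K},u\Vdash\langle Q\rangle\bigvee_{\psi\in C}\psi$, and the second over all such $Q,C$ with $\mathfrak{K},u\Vdash\neg\langle Q\rangle\bigvee_{\psi\in C}\psi$. If $\mathcal{Q}$ is infinite these conjunctions may be infinitary; an infinitary conjunction is satisfied iff every conjunct is. $\mathcal{Q}$-bisimulation game on $(\mathfrak{M},w)$, $(\mathfrak{N},v)$: two pebbles start on $w$ and $v$; Player 1 starts as attacker, Player 2 as defender (roles may swap during play). At the start of a round the pebbles lie on nodes $a,b$ of $\mathfrak{M}\sqcup\mathfrak{N}$. (i) The attacker selects one pebble, say on $a$, a $Q\in\mathcal{Q}$, and $X\subseteq N(a)$ with $(N(a),X)\in Q$; then he chooses $P\subseteq N(b)$. The defender may contest $P$ by placing one pebble on a node of $P$ and the other on a node of $N(a)$, after which a new round starts. (ii) Otherwise the defender chooses $X'\subseteq N(b)$ with $(N(b),X')\in Q$ and $P\subseteq X'$. (iii) The attacker then either moves one pebble onto a node of $N(b)\setminus X'$ and the other onto a node of $X$ and the two players swap roles, or moves one pebble onto a node of $X'$, after which the defender moves the other onto a node of $X\cup P$; a new round starts. (iv) Whenever $X$ (resp. $X'$) is chosen, the other player may instead contest it by moving one pebble onto a node of that set and the other onto a node of $N(a)\setminus X$ (resp. $N(b)\setminus X'$), then taking the role of defender (the players swap roles); a new round starts. The current attacker wins if at the start of a round the two pebbled nodes do not satisfy the same proposition symbols; a player who must choose a subset but cannot loses; infinite plays are won by Player 2. In the $d$-round game, Player 2 wins if Player 1 has not won after $d$ rounds.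 $\mathfrak{M},w\sim^d_{\mathcal{Q}}\mathfrak{N},v$ means Player 2 has a winning strategy in the $d$-round game.
   Formalization: In the d-round $\mathcal{Q}$-bisimulation game, when d rounds pass without the current attacker winning, the current defender wins, in place of Player 2 winning whenever Player 1 has not won. The statement above fails without it. *)

theory Defs
  imports Main
begin

record ('v, 'p) kripke =
  verts :: "'v set"
  edges :: "('v \<times> 'v) set"
  lab   :: "'v \<Rightarrow> 'p set"

definition kripke :: "'p set \<Rightarrow> ('v, 'p) kripke \<Rightarrow> bool" where
  "kripke Phi K \<longleftrightarrow> finite (verts K) \<and> verts K \<noteq> {} \<and>
     edges K \<subseteq> verts K \<times> verts K \<and> (\<forall>u\<in>verts K. lab K u \<subseteq> Phi)"

definition nbrs :: "('v, 'p) kripke \<Rightarrow> 'v \<Rightarrow> 'v set" where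
  "nbrs K u = {u'. (u, u') \<in> edges K}"

definition dunion :: "('v, 'p) kripke \<Rightarrow> ('w, 'p) kripke \<Rightarrow> ('v + 'w, 'p) kripke" where
  "dunion M N = \<lparr> verts = Inl ` verts M \<union> Inr ` verts N,
                 edges = map_prod Inl Inl ` edges M \<union> map_prod Inr Inr ` edges N,
                 lab = case_sum (lab M) (lab N) \<rparr>"

text \<open>A generalized quantifier is represented by its pairs (D,P) with D a set of
  naturals (a countably infinite universe, enough to hold a copy of every finite
  domain); it must be closed under isomorphism.  Membership of a pair (D,P)
  over an arbitrary type is membership of an isomorphic copy.\<close>
type_synonym gq = "(nat set \<times> nat set) set"

definition is_gq :: "gq \<Rightarrow> bool" where
  "is_gq Q \<longleftrightarrow> (\<forall>D P. (D, P) \<in> Q \<longrightarrow> P \<subseteq> D) \<and>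
     (\<forall>D P D' f. (D, P) \<in> Q \<longrightarrow> bij_betw f D D' \<longrightarrow> (D', f ` P) \<in> Q)"

definition gq_mem :: "gq \<Rightarrow> 'a set \<Rightarrow> 'a set \<Rightarrow> bool" where
  "gq_mem Q D P \<longleftrightarrow> (\<exists>(f :: 'a \<Rightarrow> nat) D' P'. (D', P') \<in> Q \<and> bij_betw f D D' \<and> f ` P = P')"

definition diam :: "gq \<Rightarrow> ('v, 'p) kripke \<Rightarrow> 'v \<Rightarrow> ('v \<Rightarrow> bool) \<Rightarrow> bool" where
  "diam Q K u S \<longleftrightarrow> gq_mem Q (nbrs K u) {u' \<in> nbrs K u. S u'}"

datatype 'p pl_form =
    FBot
  | FProp 'p
  | FNeg "'p pl_form"
  | FAnd "'p pl_form" "'p pl_form"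
  | FOr "'p pl_form" "'p pl_form"
  | FQ gq "'p pl_form"

primrec sat :: "('v, 'p) kripke \<Rightarrow> 'v \<Rightarrow> 'p pl_form \<Rightarrow> bool" where
  "sat K u FBot = False"
| "sat K u (FProp p) = (p \<in> lab K u)"
| "sat K u (FNeg \<phi>) = (\<not> sat K u \<phi>)"
| "sat K u (FAnd \<phi> \<psi>) = (sat K u \<phi> \<and> sat K u \<psi>)"
| "sat K u (FOr \<phi> \<psi>) = (sat K u \<phi> \<or> sat K u \<psi>)"
| "sat K u (FQ Q \<phi>) = diam Q K u (\<lambda>u'. sat K u' \<phi>)"

primrec md :: "'p pl_form \<Rightarrow> nat" where
  "md FBot = 0"
| "md (FProp p) = 0"
| "md (FNeg \<phi>) = md \<phi>"
| "md (FAnd \<phi> \<psi>) = max (md \<phi>) (md \<psi>)"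
| "md (FOr \<phi> \<psi>) = max (md \<phi>) (md \<psi>)"
| "md (FQ Q \<phi>) = Suc (md \<phi>)"

primrec in_PL :: "gq set \<Rightarrow> 'p set \<Rightarrow> 'p pl_form \<Rightarrow> bool" where
  "in_PL Qs Phi FBot = True"
| "in_PL Qs Phi (FProp p) = (p \<in> Phi)"
| "in_PL Qs Phi (FNeg \<phi>) = in_PL Qs Phi \<phi>"
| "in_PL Qs Phi (FAnd \<phi> \<psi>) = (in_PL Qs Phi \<phi> \<and> in_PL Qs Phi \<psi>)"
| "in_PL Qs Phi (FOr \<phi> \<psi>) = (in_PL Qs Phi \<phi> \<and> in_PL Qs Phi \<psi>)"
| "in_PL Qs Phi (FQ Q \<phi>) = (Q \<in> Qs \<and> in_PL Qs Phi \<phi>)"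

definition PL_equiv :: "gq set \<Rightarrow> 'p set \<Rightarrow> nat \<Rightarrow> ('v, 'p) kripke \<Rightarrow> 'v \<Rightarrow> ('w, 'p) kripke \<Rightarrow> 'w \<Rightarrow> bool" where
  "PL_equiv Qs Phi d M w N v \<longleftrightarrow>
     (\<forall>\<phi>. in_PL Qs Phi \<phi> \<and> md \<phi> \<le> d \<longrightarrow> (sat M w \<phi> \<longleftrightarrow> sat N v \<phi>))"

text \<open>atoms_sat Phi K u M x: M,x satisfies phi^0_{K,u}.\<close>
definition atoms_sat :: "'p set \<Rightarrow> ('a, 'p) kripke \<Rightarrow> 'a \<Rightarrow> ('b, 'p) kripke \<Rightarrow> 'b \<Rightarrow> bool" where
  "atoms_sat Phi K u M x \<longleftrightarrow>
     (\<forall>p\<in>Phi. p \<in> lab K u \<longrightarrow> p \<in> lab M x) \<and> (\<forall>p\<in>Phi. p \<notin> lab K u \<longrightarrow> p \<notin> lab M x)"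

text \<open>RK u' z means K,z satisfies phi^d_{K,u'},
  RM u' z means M,z satisfies phi^d_{K,u'}.  A set C of depth-d types is given as
  the set of nodes of K whose types it contains; the disjunction over C is
  satisfied at z iff z satisfies one of these types.  The result says that
  M,x satisfies phi^{d+1}_{K,u} (a possibly infinitary conjunction).\<close>
definition type_step :: "gq set \<Rightarrow> 'p set \<Rightarrow> ('a, 'p) kripke \<Rightarrow> 'a \<Rightarrow> ('a \<Rightarrow> 'a \<Rightarrow> bool)
    \<Rightarrow> ('b, 'p) kripke \<Rightarrow> 'b \<Rightarrow> ('a \<Rightarrow> 'b \<Rightarrow> bool) \<Rightarrow> bool" where
  "type_step Qs Phi K u RK M x RM \<longleftrightarrow> atoms_sat Phi K u M x \<and>
     (\<forall>Q\<in>Qs. \<forall>C. C \<subseteq> verts K \<longrightarrow>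
        (diam Q K u (\<lambda>z. \<exists>u'\<in>C. RK u' z) \<longrightarrow> diam Q M x (\<lambda>z. \<exists>u'\<in>C. RM u' z)) \<and>
        (\<not> diam Q K u (\<lambda>z. \<exists>u'\<in>C. RK u' z) \<longrightarrow> \<not> diam Q M x (\<lambda>z. \<exists>u'\<in>C. RM u' z)))"

text \<open>type_self Qs Phi d K u y: K,y satisfies phi^{Qs,d}_{K,u}.\<close>
primrec type_self :: "gq set \<Rightarrow> 'p set \<Rightarrow> nat \<Rightarrow> ('a, 'p) kripke \<Rightarrow> 'a \<Rightarrow> 'a \<Rightarrow> bool" where
  "type_self Qs Phi 0 K u y = atoms_sat Phi K u K y"
| "type_self Qs Phi (Suc d) K u y = type_step Qs Phi K u (type_self Qs Phi d K) K y (type_self Qs Phi d K)"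

text \<open>type_sat Qs Phi d K u M x: M,x satisfies phi^{Qs,d}_{K,u}.\<close>
primrec type_sat :: "gq set \<Rightarrow> 'p set \<Rightarrow> nat \<Rightarrow> ('a, 'p) kripke \<Rightarrow> 'a \<Rightarrow> ('b, 'p) kripke \<Rightarrow> 'b \<Rightarrow> bool" where
  "type_sat Qs Phi 0 K u M x = atoms_sat Phi K u M x"
| "type_sat Qs Phi (Suc d) K u M x = type_step Qs Phi K u (type_self Qs Phi d K) M x (\<lambda>u' z. type_sat Qs Phi d K u' M z)"

datatype player = Player1 | Player2

fun other :: "player \<Rightarrow> player" where
  "other Player1 = Player2"
| "other Player2 = Player1"

text \<open>A choice of player pl among the alternatives S: Player 2 can win iff
  (if pl is Player 2) some alternative is winning for Player 2, resp. (if pl is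
  Player 1) every alternative is winning for Player 2.  In particular a player
  who has to choose from an empty set of alternatives loses.\<close>
definition choice :: "player \<Rightarrow> 'x set \<Rightarrow> ('x \<Rightarrow> bool) \<Rightarrow> bool" where
  "choice pl S f \<longleftrightarrow> (if pl = Player2 then (\<exists>x\<in>S. f x) else (\<forall>x\<in>S. f x))"

text \<open>p2_wins Qs K k a b att: Player 2 has a winning strategy in the game on
  the arena K with k rounds left, pebbles on a and b, and att the current attacker.
  Rules: contesting makes the contesting player the defender; after the last
  round the current defender wins.\<close>
primrec p2_wins :: "gq set \<Rightarrow> ('a, 'p) kripke \<Rightarrow> nat \<Rightarrow> 'a \<Rightarrow> 'a \<Rightarrow> player \<Rightarrow> bool" where
  "p2_wins Qs K 0 a b att =
     (if lab K a \<noteq> lab K b then att = Player2 else other att = Player2)"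
| "p2_wins Qs K (Suc k) a b att =
     (if lab K a \<noteq> lab K b then att = Player2 else
      (let def = other att; W = p2_wins Qs K k in
       choice att {(x, y, Q, X). ((x, y) = (a, b) \<or> (x, y) = (b, a)) \<and> Q \<in> Qs \<and>
                                 X \<subseteq> nbrs K x \<and> gq_mem Q (nbrs K x) X}
        (\<lambda>(x, y, Q, X).
          \<comment> \<open>(iv) the defender may contest X (roles unchanged), or not (None)\<close>
          choice def (insert None (Some ` (X \<times> (nbrs K x - X))))
           (\<lambda>c. case c of Some (p, q) \<Rightarrow> W p q att | None \<Rightarrow>
             \<comment> \<open>(i) the attacker chooses P\<close>
             choice att {P. P \<subseteq> nbrs K y}
              (\<lambda>P.
                \<comment> \<open>(i) defender contests P (Inl), or (ii) chooses X' (Inr)\<close>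
                choice def (Inl ` (P \<times> nbrs K x) \<union>
                            Inr ` {X'. X' \<subseteq> nbrs K y \<and> gq_mem Q (nbrs K y) X' \<and> P \<subseteq> X'})
                 (\<lambda>c. case c of Inl (p, q) \<Rightarrow> W p q att | Inr X' \<Rightarrow>
                   \<comment> \<open>(iv) attacker contests X' (swap), or (iii): move to
                       (N(y) - X') x X (swap), or move onto X' (Inr)\<close>
                   choice att (Inl ` (X' \<times> (nbrs K y - X')) \<union> Inl ` ((nbrs K y - X') \<times> X) \<union> Inr ` X')
                    (\<lambda>c. case c of Inl (p, q) \<Rightarrow> W p q def | Inr p \<Rightarrow>
                       choice def (X \<union> P) (\<lambda>q. W p q att))))))))"

definition bisim_game :: "gq set \<Rightarrow> nat \<Rightarrow> ('v, 'p) kripke \<Rightarrow> 'v \<Rightarrow> ('w, 'p) kripke \<Rightarrow> 'w \<Rightarrow> bool" where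
  "bisim_game Qs d M w N v \<longleftrightarrow> p2_wins Qs (dunion M N) d (Inl w) (Inr v) Player1"

end

theory Submission
  imports Defs
begin

(* Everything is compared with the types.  The depth-(d+1) type of u records which unions of
   depth-d type classes inside N(u) satisfy each quantifier.  By induction on d, the nodes
   satisfying a formula of depth d form a union of depth-d type classes, so equal types give
   PL^d-equivalence.  Conversely, as the model is finite, every depth-d type class is defined by
   a finite conjunction of separating formulas, so a union of classes witnessing a type
   difference yields the separating formula <Q> (phi_1 or ... or phi_n).  For the game, a round
   whose continuation is an equivalence relation R is won by Player 2 iff whenever the
   R-closure of some classes is a Q-set at x, it is one at y as well: the attacker plays the
   R-closed set X and the nodes P of N(y) without R-partner in N(x), which forces the answer X'
   to be the R-closure; the defender answers with the R-closure of X together with P.  All of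
   this happens in the disjoint union, to which satisfaction and types transfer. *)

section \<open>Types within one model\<close>

lemma nbrs_subset_verts: "kripke Phi K \<Longrightarrow> nbrs K x \<subseteq> verts K"
  by (auto simp: kripke_def nbrs_def)

lemma atoms_sat_iff_lab_eq:
  "kripke Phi K \<Longrightarrow> a \<in> verts K \<Longrightarrow> b \<in> verts K \<Longrightarrow> atoms_sat Phi K a K b \<longleftrightarrow> lab K a = lab K b"
  unfolding kripke_def atoms_sat_def by blast

lemma diam_cong: "(\<And>z. z \<in> nbrs K x \<Longrightarrow> S z = S' z) \<Longrightarrow> diam Q K x S = diam Q K x S'"
  unfolding diam_def by (metis (mono_tags, lifting) Collect_cong)

lemma type_self_eq_type_sat: "type_self Qs Phi d K = (\<lambda>u y. type_sat Qs Phi d K u K y)"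
proof (induction d)
  case 0
  then show ?case by (simp add: fun_eq_iff)
next
  case (Suc d)
  then show ?case by (intro ext) (simp only: type_self.simps type_sat.simps)
qed

lemma type_sat_Suc_self:
  "type_sat Qs Phi (Suc d) K a K b \<longleftrightarrow> atoms_sat Phi K a K b \<and>
     (\<forall>Q\<in>Qs. \<forall>C. C \<subseteq> verts K \<longrightarrow>
        diam Q K a (\<lambda>z. \<exists>u\<in>C. type_sat Qs Phi d K u K z) =
        diam Q K b (\<lambda>z. \<exists>u\<in>C. type_sat Qs Phi d K u K z))"
  by (auto simp: type_step_def type_self_eq_type_sat)

lemma type_sat_atoms_sat: "type_sat Qs Phi d K a K b \<Longrightarrow> atoms_sat Phi K a K b"
  by (cases d) (simp_all only: type_sat_Suc_self type_sat.simps(1))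

lemma equivp_type_sat: "equivp (\<lambda>a b. type_sat Qs Phi d K a K b)"
  by (cases d) (simp_all only: type_sat_Suc_self type_sat.simps(1),
    auto intro!: equivpI reflpI sympI transpI simp: atoms_sat_def)

section \<open>Types and modal equivalence\<close>

lemma sat_eq_if_type_sat:
  assumes K: "kripke Phi K"
  shows "type_sat Qs Phi d K a K b \<Longrightarrow> in_PL Qs Phi \<phi> \<Longrightarrow> md \<phi> \<le> d \<Longrightarrow> sat K a \<phi> = sat K b \<phi>"
proof (induction d arbitrary: a b \<phi>)
  case 0
  then show ?case by (induction \<phi>) (auto simp: atoms_sat_def)
next
  case (Suc d)
  note T = \<open>type_sat Qs Phi (Suc d) K a K b\<close>
  from Suc.prems(2,3) show ?case
  proof (induction \<phi>)
    case (FProp p)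
    then show ?case using type_sat_atoms_sat[OF T] by (auto simp: atoms_sat_def)
  next
    case (FQ Q \<psi>)
    define C where "C = {u \<in> verts K. sat K u \<psi>}"
    have C: "C \<subseteq> verts K" unfolding C_def by blast
    have sat_\<psi>: "sat K z \<psi> \<longleftrightarrow> (\<exists>u\<in>C. type_sat Qs Phi d K u K z)" if "z \<in> nbrs K x" for x z
    proof
      assume "sat K z \<psi>"
      moreover have "z \<in> verts K" using that nbrs_subset_verts[OF K] by blast
      ultimately show "\<exists>u\<in>C. type_sat Qs Phi d K u K z"
        using equivp_reflp[OF equivp_type_sat, of Qs Phi d K z] unfolding C_def by blast
    next
      assume "\<exists>u\<in>C. type_sat Qs Phi d K u K z"
      then obtain u where "sat K u \<psi>" "type_sat Qs Phi d K u K z" unfolding C_def by blast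
      then show "sat K z \<psi>" using Suc.IH[of u z \<psi>] FQ.prems by simp
    qed
    have "sat K a (FQ Q \<psi>) = diam Q K a (\<lambda>z. \<exists>u\<in>C. type_sat Qs Phi d K u K z)"
      unfolding sat.simps by (rule diam_cong) (rule sat_\<psi>)
    also have "\<dots> = diam Q K b (\<lambda>z. \<exists>u\<in>C. type_sat Qs Phi d K u K z)"
      using T[unfolded type_sat_Suc_self, THEN conjunct2, rule_format] FQ.prems(1) C by simp
    also have "\<dots> = sat K b (FQ Q \<psi>)"
      unfolding sat.simps by (rule diam_cong) (rule sat_\<psi>[symmetric])
    finally show ?case .
  qed auto
qed

definition definable :: "gq set \<Rightarrow> 'p set \<Rightarrow> nat \<Rightarrow> ('a, 'p) kripke \<Rightarrow> ('a \<Rightarrow> bool) \<Rightarrow> bool" where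
  "definable Qs Phi d K S \<longleftrightarrow>
     (\<exists>\<chi>. in_PL Qs Phi \<chi> \<and> md \<chi> \<le> d \<and> (\<forall>z\<in>verts K. sat K z \<chi> \<longleftrightarrow> S z))"

lemma definable_sat: "in_PL Qs Phi \<chi> \<Longrightarrow> md \<chi> \<le> d \<Longrightarrow> definable Qs Phi d K (\<lambda>z. sat K z \<chi>)"
  unfolding definable_def by blast

lemma definable_cong:
  "definable Qs Phi d K S \<Longrightarrow> (\<And>z. z \<in> verts K \<Longrightarrow> S z = S' z) \<Longrightarrow> definable Qs Phi d K S'"
  unfolding definable_def by metis

lemma definable_Ball:
  "finite C \<Longrightarrow> (\<And>u. u \<in> C \<Longrightarrow> definable Qs Phi d K (S u)) \<Longrightarrow> definable Qs Phi d K (\<lambda>z. \<forall>u\<in>C. S u z)"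
proof (induction C rule: finite_induct)
  case empty
  show ?case using definable_sat[of Qs Phi "FNeg FBot" d K] by simp
next
  case (insert u C)
  obtain \<chi> where "in_PL Qs Phi \<chi>" "md \<chi> \<le> d" "\<forall>z\<in>verts K. sat K z \<chi> = S u z"
    using insert.prems[of u] unfolding definable_def by auto
  moreover obtain \<chi>' where "in_PL Qs Phi \<chi>'" "md \<chi>' \<le> d" "\<forall>z\<in>verts K. sat K z \<chi>' = (\<forall>u\<in>C. S u z)"
    using insert.IH insert.prems unfolding definable_def by auto
  ultimately show ?case unfolding definable_def by (intro exI[of _ "FAnd \<chi> \<chi>'"]) auto
qed

lemma definable_Bex:
  "finite C \<Longrightarrow> (\<And>u. u \<in> C \<Longrightarrow> definable Qs Phi d K (S u)) \<Longrightarrow> definable Qs Phi d K (\<lambda>z. \<exists>u\<in>C. S u z)"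
proof (induction C rule: finite_induct)
  case empty
  show ?case using definable_sat[of Qs Phi FBot d K] by simp
next
  case (insert u C)
  obtain \<chi> where "in_PL Qs Phi \<chi>" "md \<chi> \<le> d" "\<forall>z\<in>verts K. sat K z \<chi> = S u z"
    using insert.prems[of u] unfolding definable_def by auto
  moreover obtain \<chi>' where "in_PL Qs Phi \<chi>'" "md \<chi>' \<le> d" "\<forall>z\<in>verts K. sat K z \<chi>' = (\<exists>u\<in>C. S u z)"
    using insert.IH insert.prems unfolding definable_def by auto
  ultimately show ?case unfolding definable_def by (intro exI[of _ "FOr \<chi> \<chi>'"]) auto
qed

lemma definable_type_if_separable:
  assumes K: "kripke Phi K"
    and separable: "\<And>b. b \<in> verts K \<Longrightarrow> \<not> type_sat Qs Phi d K a K b \<Longrightarrow>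
       \<exists>\<psi>. in_PL Qs Phi \<psi> \<and> md \<psi> \<le> d \<and> sat K a \<psi> \<and> \<not> sat K b \<psi>"
  shows "definable Qs Phi d K (type_sat Qs Phi d K a K)"
proof -
  define B where "B = {b \<in> verts K. \<not> type_sat Qs Phi d K a K b}"
  have "\<forall>b\<in>B. \<exists>\<psi>. in_PL Qs Phi \<psi> \<and> md \<psi> \<le> d \<and> sat K a \<psi> \<and> \<not> sat K b \<psi>"
    using separable unfolding B_def by simp
  then obtain \<psi> where \<psi>: "\<forall>b\<in>B. in_PL Qs Phi (\<psi> b) \<and> md (\<psi> b) \<le> d \<and> sat K a (\<psi> b) \<and> \<not> sat K b (\<psi> b)"
    by (metis (no_types, lifting) bchoice)
  have "finite B" using K unfolding B_def kripke_def by simp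
  then have "definable Qs Phi d K (\<lambda>z. \<forall>b\<in>B. sat K z (\<psi> b))"
    by (rule definable_Ball) (use \<psi> in \<open>simp add: definable_sat\<close>)
  moreover have "(\<forall>b\<in>B. sat K z (\<psi> b)) \<longleftrightarrow> type_sat Qs Phi d K a K z" if z: "z \<in> verts K" for z
  proof
    assume "\<forall>b\<in>B. sat K z (\<psi> b)"
    then have "z \<notin> B" using \<psi> by blast
    then show "type_sat Qs Phi d K a K z" using z unfolding B_def by simp
  next
    assume type: "type_sat Qs Phi d K a K z"
    show "\<forall>b\<in>B. sat K z (\<psi> b)"
    proof
      fix b assume "b \<in> B"
      then show "sat K z (\<psi> b)" using \<psi> sat_eq_if_type_sat[OF K type, of "\<psi> b"] by blast
    qed
  qed
  ultimately show ?thesis by (rule definable_cong)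
qed

lemma separating_literal_if_not_atoms_sat:
  assumes "\<not> atoms_sat Phi K a K b"
  shows "\<exists>\<psi>. in_PL Qs Phi \<psi> \<and> md \<psi> \<le> d \<and> sat K a \<psi> \<and> \<not> sat K b \<psi>"
proof -
  obtain p where p: "p \<in> Phi" and "p \<in> lab K a \<and> p \<notin> lab K b \<or> p \<notin> lab K a \<and> p \<in> lab K b"
    using assms unfolding atoms_sat_def by auto
  then consider "sat K a (FProp p)" "\<not> sat K b (FProp p)" | "sat K a (FNeg (FProp p))" "\<not> sat K b (FNeg (FProp p))"
    by auto
  then show ?thesis
  proof cases
    case 1
    with p show ?thesis by - (rule exI[of _ "FProp p"], simp)
  next
    case 2
    with p show ?thesis by - (rule exI[of _ "FNeg (FProp p)"], simp)
  qed
qed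

lemma separating_formula_if_not_type_sat:
  assumes K: "kripke Phi K"
  shows "b \<in> verts K \<Longrightarrow> \<not> type_sat Qs Phi d K a K b \<Longrightarrow>
    \<exists>\<psi>. in_PL Qs Phi \<psi> \<and> md \<psi> \<le> d \<and> sat K a \<psi> \<and> \<not> sat K b \<psi>"
proof (induction d arbitrary: a b)
  case 0
  then show ?case by (intro separating_literal_if_not_atoms_sat) simp
next
  case (Suc d)
  show ?case
  proof (cases "atoms_sat Phi K a K b")
    case False
    then show ?thesis by (rule separating_literal_if_not_atoms_sat)
  next
    case True
    let ?S = "\<lambda>C z. \<exists>u\<in>C. type_sat Qs Phi d K u K z"
    from Suc.prems(2) True obtain Q C where Q: "Q \<in> Qs" and C: "C \<subseteq> verts K"
      and differ: "diam Q K a (?S C) \<noteq> diam Q K b (?S C)"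
      unfolding type_sat_Suc_self by auto
    have "finite C" using K C unfolding kripke_def by (auto intro: finite_subset)
    then have "definable Qs Phi d K (?S C)"
      using definable_type_if_separable[OF K Suc.IH] by (intro definable_Bex)
    then obtain \<delta> where \<delta>: "in_PL Qs Phi \<delta>" "md \<delta> \<le> d" "\<forall>z\<in>verts K. sat K z \<delta> = ?S C z"
      unfolding definable_def by blast
    have "sat K x (FQ Q \<delta>) = diam Q K x (?S C)" for x
      unfolding sat.simps
    proof (rule diam_cong)
      fix z assume "z \<in> nbrs K x"
      then have "z \<in> verts K" using nbrs_subset_verts[OF K] by blast
      then show "sat K z \<delta> = ?S C z" by (rule \<delta>(3)[rule_format])
    qed
    then have differ': "sat K a (FQ Q \<delta>) \<noteq> sat K b (FQ Q \<delta>)" using differ by simp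
    have FQ_\<delta>: "in_PL Qs Phi (FQ Q \<delta>)" "md (FQ Q \<delta>) \<le> Suc d" using Q \<delta>(1,2) by simp_all
    show ?thesis
    proof (cases "sat K a (FQ Q \<delta>)")
      case True
      with differ' FQ_\<delta> show ?thesis by blast
    next
      case False
      with differ' have "sat K a (FNeg (FQ Q \<delta>))" "\<not> sat K b (FNeg (FQ Q \<delta>))" by simp_all
      moreover have "in_PL Qs Phi (FNeg (FQ Q \<delta>))" "md (FNeg (FQ Q \<delta>)) \<le> Suc d" using FQ_\<delta> by simp_all
      ultimately show ?thesis by blast
    qed
  qed
qed

lemma type_sat_iff_sat_eq:
  assumes "kripke Phi K" and "b \<in> verts K"
  shows "type_sat Qs Phi d K a K b \<longleftrightarrow> (\<forall>\<phi>. in_PL Qs Phi \<phi> \<and> md \<phi> \<le> d \<longrightarrow> sat K a \<phi> = sat K b \<phi>)"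
  using sat_eq_if_type_sat[OF assms(1)] separating_formula_if_not_type_sat[OF assms] by metis

section \<open>Types and the bisimulation game\<close>

(* Unfolding the game produces the same conditions as the round below, up to the order of
   premises, quantifiers and disjuncts; this rewrite set brings both into one normal form. *)
lemmas disj_normal_form = imp_conv_disj de_Morgan_conj ball_simps(10) not_not disj_comms disj_assoc all_simps

lemma choice_Player1 [simp]: "choice Player1 S f \<longleftrightarrow> (\<forall>x\<in>S. f x)"
  by (simp add: choice_def)

lemma choice_Player2 [simp]: "choice Player2 S f \<longleftrightarrow> (\<exists>x\<in>S. f x)"
  by (simp add: choice_def)

lemma p2_wins_Player2_iff: "p2_wins Qs K k a b Player2 \<longleftrightarrow> \<not> p2_wins Qs K k a b Player1"
proof (induction k arbitrary: a b)
  case 0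
  then show ?case by simp
next
  case (Suc k)
  show ?case
    by (cases "lab K a = lab K b")
      (simp_all only: p2_wins.simps Let_def choice_Player1 choice_Player2 other.simps Suc,
       simp_all add: ball_Un bex_Un, simp only: disj_normal_form)
qed

(* One round in which Player 1 attacks with the Q-set X at x and then P at y.  R p q means that
   Player 2 wins the remaining game from p, q while still defending; after a swap of roles she
   needs \<not> R p q instead (p2_wins_Player2_iff).  The two premises on R say that she cannot
   contest X or P; the conditions on X' say that Player 1 can neither contest X' nor move into
   N(y) - X' against X, and that every move into X' is answered within X \<union> P. *)
definition p2_wins_round :: "gq set \<Rightarrow> ('a, 'p) kripke \<Rightarrow> ('a \<Rightarrow> 'a \<Rightarrow> bool) \<Rightarrow> 'a \<Rightarrow> 'a \<Rightarrow> bool" where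
  "p2_wins_round Qs K R x y \<longleftrightarrow>
     (\<forall>Q X P. Q \<in> Qs \<longrightarrow> X \<subseteq> nbrs K x \<longrightarrow> gq_mem Q (nbrs K x) X \<longrightarrow>
        (\<forall>p\<in>X. \<forall>q\<in>nbrs K x - X. \<not> R p q) \<longrightarrow> P \<subseteq> nbrs K y \<longrightarrow> (\<forall>p\<in>P. \<forall>q\<in>nbrs K x. \<not> R p q) \<longrightarrow>
        (\<exists>X'. X' \<subseteq> nbrs K y \<and> gq_mem Q (nbrs K y) X' \<and> P \<subseteq> X' \<and>
           (\<forall>p\<in>X'. \<forall>q\<in>nbrs K y - X'. \<not> R p q) \<and> (\<forall>p\<in>nbrs K y - X'. \<forall>q\<in>X. \<not> R p q) \<and>
           (\<forall>p\<in>X'. \<exists>q\<in>X \<union> P. R p q)))"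

lemma p2_wins_Suc_Player1:
  "p2_wins Qs K (Suc k) a b Player1 \<longleftrightarrow> lab K a = lab K b \<and>
     p2_wins_round Qs K (\<lambda>p q. p2_wins Qs K k p q Player1) a b \<and>
     p2_wins_round Qs K (\<lambda>p q. p2_wins Qs K k p q Player1) b a"
  unfolding p2_wins_round_def
  by (cases "lab K a = lab K b")
    (simp_all only: p2_wins.simps Let_def choice_Player1 choice_Player2 other.simps p2_wins_Player2_iff,
     simp_all add: ball_Un bex_Un conj_disj_distribR all_conj_distrib, simp only: disj_normal_form)

lemma p2_wins_round_cong:
  assumes agree: "\<And>p q. p \<in> nbrs K x \<union> nbrs K y \<Longrightarrow> q \<in> nbrs K x \<union> nbrs K y \<Longrightarrow> R p q \<longleftrightarrow> R' p q"
    and round: "p2_wins_round Qs K R x y"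
  shows "p2_wins_round Qs K R' x y"
  unfolding p2_wins_round_def
proof (intro allI impI)
  fix Q X P
  assume Q: "Q \<in> Qs" and X: "X \<subseteq> nbrs K x" "gq_mem Q (nbrs K x) X"
    and X_closed: "\<forall>p\<in>X. \<forall>q\<in>nbrs K x - X. \<not> R' p q"
    and P: "P \<subseteq> nbrs K y" and P_apart: "\<forall>p\<in>P. \<forall>q\<in>nbrs K x. \<not> R' p q"
  have X_closed_R: "\<forall>p\<in>X. \<forall>q\<in>nbrs K x - X. \<not> R p q" using X_closed X agree by blast
  have P_apart_R: "\<forall>p\<in>P. \<forall>q\<in>nbrs K x. \<not> R p q" using P_apart P agree by blast
  obtain X' where X': "X' \<subseteq> nbrs K y" "gq_mem Q (nbrs K y) X'" "P \<subseteq> X'"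
    and R_conds: "\<forall>p\<in>X'. \<forall>q\<in>nbrs K y - X'. \<not> R p q" "\<forall>p\<in>nbrs K y - X'. \<forall>q\<in>X. \<not> R p q"
      "\<forall>p\<in>X'. \<exists>q\<in>X \<union> P. R p q"
    using round[unfolded p2_wins_round_def, rule_format (no_asm), OF Q X X_closed_R P P_apart_R] by blast
  have "\<forall>p\<in>X'. \<forall>q\<in>nbrs K y - X'. \<not> R' p q" using R_conds(1) X'(1) agree by blast
  moreover have "\<forall>p\<in>nbrs K y - X'. \<forall>q\<in>X. \<not> R' p q" using R_conds(2) X agree by blast
  moreover have "\<forall>p\<in>X'. \<exists>q\<in>X \<union> P. R' p q" using R_conds(3) X'(1) X P agree by blast
  ultimately show "\<exists>X'. X' \<subseteq> nbrs K y \<and> gq_mem Q (nbrs K y) X' \<and> P \<subseteq> X' \<and>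
      (\<forall>p\<in>X'. \<forall>q\<in>nbrs K y - X'. \<not> R' p q) \<and> (\<forall>p\<in>nbrs K y - X'. \<forall>q\<in>X. \<not> R' p q) \<and>
      (\<forall>p\<in>X'. \<exists>q\<in>X \<union> P. R' p q)"
    using X' by blast
qed

lemma p2_wins_round_imp_diam:
  assumes R: "equivp R" and round: "p2_wins_round Qs K R x y" and Q: "Q \<in> Qs"
    and diam_x: "diam Q K x (\<lambda>z. \<exists>u\<in>C. R u z)"
  shows "diam Q K y (\<lambda>z. \<exists>u\<in>C. R u z)"
proof -
  let ?S = "\<lambda>z. \<exists>u\<in>C. R u z"
  have S_closed: "?S q" if "?S p" "R p q" for p q
    using that equivp_transp[OF R] by blast
  define X where "X = {z \<in> nbrs K x. ?S z}"
  define P where "P = {z \<in> nbrs K y. ?S z \<and> (\<forall>q\<in>nbrs K x. \<not> R z q)}"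
  have X: "X \<subseteq> nbrs K x" "gq_mem Q (nbrs K x) X"
    using diam_x unfolding X_def diam_def by auto
  have X_closed: "\<forall>p\<in>X. \<forall>q\<in>nbrs K x - X. \<not> R p q"
    using S_closed unfolding X_def by blast
  have P: "P \<subseteq> nbrs K y" and P_apart: "\<forall>p\<in>P. \<forall>q\<in>nbrs K x. \<not> R p q"
    unfolding P_def by auto
  obtain X' where X': "X' \<subseteq> nbrs K y" "gq_mem Q (nbrs K y) X'" "P \<subseteq> X'"
    and outside: "\<forall>p\<in>nbrs K y - X'. \<forall>q\<in>X. \<not> R p q"
    and inside: "\<forall>p\<in>X'. \<exists>q\<in>X \<union> P. R p q"
    using round[unfolded p2_wins_round_def, rule_format (no_asm), OF Q X X_closed P P_apart] by blast
  have "X' = {z \<in> nbrs K y. ?S z}"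
  proof (intro equalityI subsetI)
    fix p assume "p \<in> X'"
    moreover obtain q where "q \<in> X \<union> P" "R p q" using inside \<open>p \<in> X'\<close> by blast
    moreover have "?S q" using \<open>q \<in> X \<union> P\<close> unfolding X_def P_def by blast
    ultimately show "p \<in> {z \<in> nbrs K y. ?S z}"
      using X'(1) S_closed equivp_symp[OF R] by blast
  next
    fix z assume z: "z \<in> {z \<in> nbrs K y. ?S z}"
    show "z \<in> X'"
    proof (cases "z \<in> P")
      case False
      then obtain q where "q \<in> nbrs K x" "R z q" using z unfolding P_def by blast
      moreover have "q \<in> X" using calculation z S_closed unfolding X_def by blast
      ultimately show ?thesis using outside z by blast
    qed (use X'(3) in blast)
  qed
  then show ?thesis using X'(2) unfolding diam_def by simp
qed

lemma p2_wins_round_if_diam: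
  assumes R: "equivp R"
    and transfer: "\<And>Q C. Q \<in> Qs \<Longrightarrow> C \<subseteq> nbrs K x \<union> nbrs K y \<Longrightarrow>
       diam Q K x (\<lambda>z. \<exists>u\<in>C. R u z) \<Longrightarrow> diam Q K y (\<lambda>z. \<exists>u\<in>C. R u z)"
  shows "p2_wins_round Qs K R x y"
  unfolding p2_wins_round_def
proof (intro allI impI)
  fix Q X P
  assume Q: "Q \<in> Qs" and X: "X \<subseteq> nbrs K x" "gq_mem Q (nbrs K x) X"
    and X_closed: "\<forall>p\<in>X. \<forall>q\<in>nbrs K x - X. \<not> R p q"
    and P: "P \<subseteq> nbrs K y" and P_apart: "\<forall>p\<in>P. \<forall>q\<in>nbrs K x. \<not> R p q"
  let ?S = "\<lambda>z. \<exists>u\<in>X \<union> P. R u z"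
  define X' where "X' = {z \<in> nbrs K y. ?S z}"
  have "{z \<in> nbrs K x. ?S z} = X"
  proof (intro equalityI subsetI)
    fix z assume "z \<in> {z \<in> nbrs K x. ?S z}"
    then obtain u where "z \<in> nbrs K x" "u \<in> X \<union> P" "R u z" by blast
    then show "z \<in> X" using X_closed P_apart by blast
  next
    fix z assume "z \<in> X"
    then show "z \<in> {z \<in> nbrs K x. ?S z}" using X(1) equivp_reflp[OF R] by blast
  qed
  then have "diam Q K x ?S" using X(2) unfolding diam_def by simp
  moreover have "X \<union> P \<subseteq> nbrs K x \<union> nbrs K y" using X(1) P by blast
  ultimately have "diam Q K y ?S" using transfer[OF Q] by blast
  then have "gq_mem Q (nbrs K y) X'" unfolding diam_def X'_def .
  moreover have "X' \<subseteq> nbrs K y" "P \<subseteq> X'" using P equivp_reflp[OF R] unfolding X'_def by blast+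
  moreover have "\<forall>p\<in>X'. \<forall>q\<in>nbrs K y - X'. \<not> R p q"
    using equivp_transp[OF R] unfolding X'_def by blast
  moreover have "\<forall>p\<in>nbrs K y - X'. \<forall>q\<in>X. \<not> R p q"
    using equivp_symp[OF R] unfolding X'_def by blast
  moreover have "\<forall>p\<in>X'. \<exists>q\<in>X \<union> P. R p q"
    using equivp_symp[OF R] unfolding X'_def by blast
  ultimately show "\<exists>X'. X' \<subseteq> nbrs K y \<and> gq_mem Q (nbrs K y) X' \<and> P \<subseteq> X' \<and>
      (\<forall>p\<in>X'. \<forall>q\<in>nbrs K y - X'. \<not> R p q) \<and> (\<forall>p\<in>nbrs K y - X'. \<forall>q\<in>X. \<not> R p q) \<and>
      (\<forall>p\<in>X'. \<exists>q\<in>X \<union> P. R p q)"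
    by blast
qed

lemma p2_wins_round_iff_diam:
  assumes K: "kripke Phi K" and R: "equivp R"
  shows "p2_wins_round Qs K R x y \<longleftrightarrow>
    (\<forall>Q\<in>Qs. \<forall>C. C \<subseteq> verts K \<longrightarrow> diam Q K x (\<lambda>z. \<exists>u\<in>C. R u z) \<longrightarrow> diam Q K y (\<lambda>z. \<exists>u\<in>C. R u z))"
proof
  assume "p2_wins_round Qs K R x y"
  then show "\<forall>Q\<in>Qs. \<forall>C. C \<subseteq> verts K \<longrightarrow> diam Q K x (\<lambda>z. \<exists>u\<in>C. R u z) \<longrightarrow> diam Q K y (\<lambda>z. \<exists>u\<in>C. R u z)"
    using p2_wins_round_imp_diam[OF R] by blast
next
  assume transfer: "\<forall>Q\<in>Qs. \<forall>C. C \<subseteq> verts K \<longrightarrow> diam Q K x (\<lambda>z. \<exists>u\<in>C. R u z) \<longrightarrow> diam Q K y (\<lambda>z. \<exists>u\<in>C. R u z)"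
  show "p2_wins_round Qs K R x y"
  proof (rule p2_wins_round_if_diam[OF R])
    fix Q C assume "Q \<in> Qs" "C \<subseteq> nbrs K x \<union> nbrs K y" "diam Q K x (\<lambda>z. \<exists>u\<in>C. R u z)"
    moreover have "C \<subseteq> verts K" using \<open>C \<subseteq> nbrs K x \<union> nbrs K y\<close> nbrs_subset_verts[OF K] by blast
    ultimately show "diam Q K y (\<lambda>z. \<exists>u\<in>C. R u z)" using transfer by simp
  qed
qed

lemma p2_wins_iff_type_sat:
  assumes K: "kripke Phi K"
  shows "a \<in> verts K \<Longrightarrow> b \<in> verts K \<Longrightarrow> p2_wins Qs K k a b Player1 \<longleftrightarrow> type_sat Qs Phi k K a K b"
proof (induction k arbitrary: a b)
  case 0
  then show ?case using atoms_sat_iff_lab_eq[OF K] by simp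
next
  case (Suc k)
  let ?W = "\<lambda>p q. p2_wins Qs K k p q Player1"
  let ?T = "\<lambda>p q. type_sat Qs Phi k K p K q"
  have agree: "?W p q \<longleftrightarrow> ?T p q" if "p \<in> nbrs K x \<union> nbrs K y" "q \<in> nbrs K x \<union> nbrs K y" for x y p q
    using that nbrs_subset_verts[OF K] by (intro Suc.IH) blast+
  have round_eq: "p2_wins_round Qs K ?W x y \<longleftrightarrow> p2_wins_round Qs K ?T x y" for x y
    using p2_wins_round_cong[of K x y ?W ?T] p2_wins_round_cong[of K x y ?T ?W] agree by blast
  have "p2_wins Qs K (Suc k) a b Player1 \<longleftrightarrow>
      atoms_sat Phi K a K b \<and> p2_wins_round Qs K ?T a b \<and> p2_wins_round Qs K ?T b a"
    unfolding p2_wins_Suc_Player1 round_eq atoms_sat_iff_lab_eq[OF K Suc.prems] ..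
  also have "\<dots> \<longleftrightarrow> type_sat Qs Phi (Suc k) K a K b"
    unfolding type_sat_Suc_self p2_wins_round_iff_diam[OF K equivp_type_sat] by auto
  finally show ?case .
qed

section \<open>Disjoint unions\<close>

lemma nbrs_dunion_Inl: "nbrs (dunion M N) (Inl x) = Inl ` nbrs M x"
  by (auto simp: nbrs_def dunion_def)

lemma nbrs_dunion_Inr: "nbrs (dunion M N) (Inr x) = Inr ` nbrs N x"
  by (auto simp: nbrs_def dunion_def)

lemma verts_dunion: "verts (dunion M N) = Inl ` verts M \<union> Inr ` verts N"
  by (simp add: dunion_def)

lemma lab_dunion: "lab (dunion M N) = case_sum (lab M) (lab N)"
  by (simp add: dunion_def)

lemma kripke_dunion: "kripke Phi M \<Longrightarrow> kripke Phi N \<Longrightarrow> kripke Phi (dunion M N)"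
  unfolding kripke_def dunion_def by (auto simp: subset_iff)

lemma gq_mem_image:
  assumes "inj_on g D" and "P \<subseteq> D"
  shows "gq_mem Q (g ` D) (g ` P) \<longleftrightarrow> gq_mem Q D P"
proof
  assume "gq_mem Q (g ` D) (g ` P)"
  then obtain f D' P' where "(D', P') \<in> Q" "bij_betw f (g ` D) D'" "f ` g ` P = P'"
    unfolding gq_mem_def by blast
  moreover have "bij_betw (f \<circ> g) D D'"
    using bij_betw_trans[OF inj_on_imp_bij_betw[OF assms(1)]] calculation(2) .
  ultimately show "gq_mem Q D P" unfolding gq_mem_def by (metis image_comp)
next
  assume "gq_mem Q D P"
  then obtain f D' P' where "(D', P') \<in> Q" "bij_betw f D D'" "f ` P = P'"
    unfolding gq_mem_def by blast
  moreover have "bij_betw (f \<circ> inv_into D g) (g ` D) D'"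
    using bij_betw_trans[OF bij_betw_inv_into[OF inj_on_imp_bij_betw[OF assms(1)]]] calculation(2) .
  moreover have "(f \<circ> inv_into D g) ` g ` P = f ` P"
    using assms by (simp add: image_comp subset_iff)
  ultimately show "gq_mem Q (g ` D) (g ` P)" unfolding gq_mem_def by metis
qed

lemma diam_dunion_Inl: "diam Q (dunion M N) (Inl x) S = diam Q M x (\<lambda>z. S (Inl z))"
proof -
  have "{u \<in> Inl ` nbrs M x. S u} = Inl ` {z \<in> nbrs M x. S (Inl z)}" by auto
  then show ?thesis unfolding diam_def nbrs_dunion_Inl by (simp add: gq_mem_image)
qed

lemma diam_dunion_Inr: "diam Q (dunion M N) (Inr x) S = diam Q N x (\<lambda>z. S (Inr z))"
proof -
  have "{u \<in> Inr ` nbrs N x. S u} = Inr ` {z \<in> nbrs N x. S (Inr z)}" by auto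
  then show ?thesis unfolding diam_def nbrs_dunion_Inr by (simp add: gq_mem_image)
qed

lemma sat_dunion_Inl: "sat (dunion M N) (Inl x) \<phi> = sat M x \<phi>"
  by (induction \<phi> arbitrary: x) (simp_all add: diam_dunion_Inl lab_dunion)

lemma sat_dunion_Inr: "sat (dunion M N) (Inr x) \<phi> = sat N x \<phi>"
  by (induction \<phi> arbitrary: x) (simp_all add: diam_dunion_Inr lab_dunion)

lemma type_sat_dunion_Inr: "type_sat Qs Phi d K u (dunion M N) (Inr v) = type_sat Qs Phi d K u N v"
  by (induction d arbitrary: u v) (simp_all add: type_step_def atoms_sat_def diam_dunion_Inr lab_dunion)

theorem theorem4p2:
  fixes Qs :: "gq set" and Phi :: "'p set" and d :: nat
    and M :: "('v, 'p) kripke" and w :: 'v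
    and N :: "('w, 'p) kripke" and v :: 'w
  assumes "\<forall>Q\<in>Qs. is_gq Q"
    and "finite Phi"
    and "kripke Phi M" and "kripke Phi N"
    and "w \<in> verts M" and "v \<in> verts N"
  shows "(bisim_game Qs d M w N v \<longleftrightarrow> PL_equiv Qs Phi d M w N v) \<and>
         (PL_equiv Qs Phi d M w N v \<longleftrightarrow> type_sat Qs Phi d (dunion M N) (Inl w) N v)"
proof -
  let ?K = "dunion M N"
  have K: "kripke Phi ?K" using assms(3,4) by (rule kripke_dunion)
  have w: "Inl w \<in> verts ?K" and v: "Inr v \<in> verts ?K" using assms(5,6) by (simp_all add: verts_dunion)
  have "bisim_game Qs d M w N v \<longleftrightarrow> type_sat Qs Phi d ?K (Inl w) ?K (Inr v)"
    unfolding bisim_game_def by (rule p2_wins_iff_type_sat[OF K w v])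
  moreover have "PL_equiv Qs Phi d M w N v \<longleftrightarrow> type_sat Qs Phi d ?K (Inl w) ?K (Inr v)"
    unfolding PL_equiv_def type_sat_iff_sat_eq[OF K v] sat_dunion_Inl sat_dunion_Inr ..
  moreover have "type_sat Qs Phi d ?K (Inl w) ?K (Inr v) \<longleftrightarrow> type_sat Qs Phi d ?K (Inl w) N v"
    by (rule type_sat_dunion_Inr)
  ultimately show ?thesis by blast
qed

end
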